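(* Let $\Gamma,\Gamma'$ be bases and $\Delta,\Delta'$ name contexts with $\Gamma'\le_D\Gamma$ and $\Delta'\le_C\Delta$. If $\Gamma\vdash T:\sigma\mid\Delta$ is derivable, then $\Gamma'\vdash T:\sigma\mid\Delta'$ is derivable, where $T$ is any term or command.
   Context: $\lambda\mu$ terms and commands: $M::=x\mid\lambda x.M\mid MN\mid\mu\alpha.\mathsf C$ and $\mathsf C::=[\alpha]M$, over term variables $x$ and names $\alpha$, up to renaming of bound variables and names. Types. Fix an $\omega$-algebraic lattice $R$ with compact elements $\mathcal K(R)$. - $\Lambda_R$: $\rho::=\psi_a\mid\omega\mid\rho\wedge\rho$ ($a\in\mathcal K(R)$). - $\Lambda_D$: $\delta::=\rho\mid\kappa\to\rho\mid\omega\mid\delta\wedge\delta$. - $\Lambda_C$: $\kappa::=\delta\times\kappa\mid\omega\mid\kappa\wedge\kappa$. $\times$ binds tighter than $\to$ and is right associative. An intersection type theory is a reflexive, transitive relation $\le$ with $\sigma\wedge\tau\le\sigma$, $\sigma\wedge\tau\le\tau$, $\sigma\le\omega$, and, if $\rho\le\sigma$ and $\rho\le\tau$, then $\rho\le\sigma\wedge\tau$; $\sim$ denotes $\le\cap\ge$. The relations are: - $\le_R$: the least such theory on $\Lambda_R$ with $\psi_\bot\sim\omega$ and $\psi_{a\sqcup b}\sim\psi_a\wedge\psi_b$. - $\le_D$ and $\le_C$: the least such theories closed under: - if $\rho_1\le_R\rho_2$ then $\rho_1\le_D\rho_2$; - $\omega\le_D\omega\to\omega$; - $\psi_a\le_D\omega\to\psi_a$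 and $\omega\to\psi_a\le_D\psi_a$; - $\omega\le_C\omega\times\omega$; - $(\kappa\to\rho_1)\wedge(\kappa\to\rho_2)\le_D\kappa\to(\rho_1\wedge\rho_2)$; - $(\delta_1\times\kappa_1)\wedge(\delta_2\times\kappa_2)\le_C(\delta_1\wedge\delta_2)\times(\kappa_1\wedge\kappa_2)$; - contravariance/covariance of $\to$ (if $\kappa_2\le_C\kappa_1$ and $\rho_1\le_R\rho_2$ then $\kappa_1\to\rho_1\le_D\kappa_2\to\rho_2$); - covariance of $\times$ in both arguments. Type assignment. A basis $\Gamma$ is a finite map from term variables to $\Lambda_D$, and a name context $\Delta$ is a finite map from names to $\Lambda_C$. $\Gamma(x)$ denotes the assigned type, or $\omega$ if $x\notin\mathrm{dom}(\Gamma)$; similarly $\Delta(\alpha)$. $\Gamma,x{:}\delta$ denotes $\Gamma\cup\{x{:}\delta\}$ (requiring $x\notin\mathrm{dom}(\Gamma)$ or $x{:}\delta\in\Gamma$); $\Gamma\setminus x$ and $\Delta\setminus\alpha$ remove an entry. $\Gamma'\le_D\Gamma$ means $\Gamma'(x)\le_D\Gamma(x)$ for all term variables $x$, and $\Delta'\le_C\Delta$ means $\Delta'(\alpha)\le_C\Delta(\alpha)$ for all names $\alpha$. The rules are: - (Ax) $\Gamma,x{:}\delta\vdash x:\delta\mid\Delta$. - (Abs) From $\Gamma\vdash M:\kappa\to\rho\mid\Delta$ with $\Gamma(x)=\delta$, infer $\Gamma\setminus x\vdash\lambda x.M:\delta\times\kappa\to\rho\mid\Delta$. - (App) From $\Gamma\vdash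 M:\delta\times\kappa\to\rho\mid\Delta$ and $\Gamma\vdash N:\delta\mid\Delta$, infer $\Gamma\vdash MN:\kappa\to\rho\mid\Delta$. - (Cmd) From $\Gamma\vdash M:\delta\mid\Delta$ with $\Delta(\alpha)=\kappa$, infer $\Gamma\vdash[\alpha]M:\delta\times\kappa\mid\Delta$. - ($\mu$) From $\Gamma\vdash\mathsf C:(\kappa'\to\rho)\times\kappa'\mid\Delta$ with $\Delta(\alpha)=\kappa$, infer $\Gamma\vdash\mu\alpha.\mathsf C:\kappa\to\rho\mid\Delta\setminus\alpha$. - ($\wedge$) From $T:\sigma$ and $T:\tau$ (same $\Gamma,\Delta$), infer $T:\sigma\wedge\tau$. - ($\omega$) $\Gamma\vdash T:\omega\mid\Delta$. - ($\le$) From $\Gamma\vdash T:\sigma\mid\Delta$ and $\sigma\le\tau$ (in $\le_D$ or $\le_C$), infer $\Gamma\vdash T:\tau\mid\Delta$. Variables of $\Gamma$ and names of $\Delta$ are assumed not bound in $T$. *)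

theory Defs
  imports Main "HOL-Library.Countable_Set"
begin

definition directed :: "'a::complete_lattice set \<Rightarrow> bool" where
  "directed D \<longleftrightarrow> D \<noteq> {} \<and> (\<forall>x\<in>D. \<forall>y\<in>D. \<exists>z\<in>D. x \<le> z \<and> y \<le> z)"

definition compact :: "'a::complete_lattice \<Rightarrow> bool" where
  "compact a \<longleftrightarrow> (\<forall>D. directed D \<and> a \<le> Sup D \<longrightarrow> (\<exists>d\<in>D. a \<le> d))"

definition omega_algebraic :: "'a::complete_lattice itself \<Rightarrow> bool" where
  "omega_algebraic _ \<longleftrightarrow>
     (\<forall>x::'a. x = Sup {k. compact k \<and> k \<le> x}) \<and> countable {k::'a. compact k}"

section \<open>Types (one raw syntax, with sort predicates for Lambda_R, Lambda_D, Lambda_C)\<close>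

datatype 'a ty =
    Psi 'a
  | Om
  | Inter "'a ty" "'a ty"
  | Arr "'a ty" "'a ty"
  | Times "'a ty" "'a ty"

fun isR :: "'a::complete_lattice ty \<Rightarrow> bool" where
  "isR (Psi a) = compact a"
| "isR Om = True"
| "isR (Inter s t) = (isR s \<and> isR t)"
| "isR (Arr _ _) = False"
| "isR (Times _ _) = False"

fun isD :: "'a::complete_lattice ty \<Rightarrow> bool" and isC :: "'a::complete_lattice ty \<Rightarrow> bool" where
  "isD (Psi a) = compact a"
| "isD Om = True"
| "isD (Inter s t) = (isD s \<and> isD t)"
| "isD (Arr k r) = (isC k \<and> isR r)"
| "isD (Times _ _) = False"
| "isC (Psi _) = False"
| "isC Om = True"
| "isC (Inter s t) = (isC s \<and> isC t)"
| "isC (Arr _ _) = False"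
| "isC (Times d k) = (isD d \<and> isC k)"

inductive leR :: "'a::complete_lattice ty \<Rightarrow> 'a ty \<Rightarrow> bool" where
  R_refl: "isR s \<Longrightarrow> leR s s"
| R_trans: "leR s t \<Longrightarrow> leR t u \<Longrightarrow> leR s u"
| R_interL: "isR s \<Longrightarrow> isR t \<Longrightarrow> leR (Inter s t) s"
| R_interR: "isR s \<Longrightarrow> isR t \<Longrightarrow> leR (Inter s t) t"
| R_om: "isR s \<Longrightarrow> leR s Om"
| R_glb: "leR r s \<Longrightarrow> leR r t \<Longrightarrow> leR r (Inter s t)"
| R_bot1: "leR (Psi bot) Om"
| R_bot2: "leR Om (Psi bot)"
| R_sup1: "compact a \<Longrightarrow> compact b \<Longrightarrow> leR (Psi (sup a b)) (Inter (Psi a) (Psi b))"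
| R_sup2: "compact a \<Longrightarrow> compact b \<Longrightarrow> leR (Inter (Psi a) (Psi b)) (Psi (sup a b))"

inductive leD :: "'a::complete_lattice ty \<Rightarrow> 'a ty \<Rightarrow> bool"
      and leC :: "'a::complete_lattice ty \<Rightarrow> 'a ty \<Rightarrow> bool" where
  D_refl: "isD s \<Longrightarrow> leD s s"
| D_trans: "leD s t \<Longrightarrow> leD t u \<Longrightarrow> leD s u"
| D_interL: "isD s \<Longrightarrow> isD t \<Longrightarrow> leD (Inter s t) s"
| D_interR: "isD s \<Longrightarrow> isD t \<Longrightarrow> leD (Inter s t) t"
| D_om: "isD s \<Longrightarrow> leD s Om"
| D_glb: "leD r s \<Longrightarrow> leD r t \<Longrightarrow> leD r (Inter s t)"
| D_R: "leR r1 r2 \<Longrightarrow> leD r1 r2"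
| D_omarr: "leD Om (Arr Om Om)"
| D_psi1: "compact a \<Longrightarrow> leD (Psi a) (Arr Om (Psi a))"
| D_psi2: "compact a \<Longrightarrow> leD (Arr Om (Psi a)) (Psi a)"
| D_arrinter: "isC k \<Longrightarrow> isR r1 \<Longrightarrow> isR r2 \<Longrightarrow>
     leD (Inter (Arr k r1) (Arr k r2)) (Arr k (Inter r1 r2))"
| D_arr: "leC k2 k1 \<Longrightarrow> leR r1 r2 \<Longrightarrow> leD (Arr k1 r1) (Arr k2 r2)"
| C_refl: "isC s \<Longrightarrow> leC s s"
| C_trans: "leC s t \<Longrightarrow> leC t u \<Longrightarrow> leC s u"
| C_interL: "isC s \<Longrightarrow> isC t \<Longrightarrow> leC (Inter s t) s"
| C_interR: "isC s \<Longrightarrow> isC t \<Longrightarrow> leC (Inter s t) t"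
| C_om: "isC s \<Longrightarrow> leC s Om"
| C_glb: "leC r s \<Longrightarrow> leC r t \<Longrightarrow> leC r (Inter s t)"
| C_omtimes: "leC Om (Times Om Om)"
| C_timesinter: "isD d1 \<Longrightarrow> isD d2 \<Longrightarrow> isC k1 \<Longrightarrow> isC k2 \<Longrightarrow>
     leC (Inter (Times d1 k1) (Times d2 k2)) (Times (Inter d1 d2) (Inter k1 k2))"
| C_times: "leD d1 d2 \<Longrightarrow> leC k1 k2 \<Longrightarrow> leC (Times d1 k1) (Times d2 k2)"

section \<open>lambda-mu terms and commands (de Bruijn indices for variables and names)\<close>

datatype trm =
    Var nat
  | Lam trm
  | App trm trm
  | Mu cmd             (* binds name 0 *)
and cmd =
    Named nat trm      (* [alpha] M, alpha a name de Bruijn index *)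

text \<open>A basis / name context is a total function; the value Om plays the role of
  "not in the domain" (the paper sets Gamma(x) = omega for x outside dom Gamma).
  Removing the bound variable / name (Gamma minus x) is the de Bruijn shift.\<close>

definition basis :: "(nat \<Rightarrow> 'a::complete_lattice ty) \<Rightarrow> bool" where
  "basis \<Gamma> \<longleftrightarrow> finite {i. \<Gamma> i \<noteq> Om} \<and> (\<forall>i. isD (\<Gamma> i))"

definition name_ctx :: "(nat \<Rightarrow> 'a::complete_lattice ty) \<Rightarrow> bool" where
  "name_ctx \<Delta> \<longleftrightarrow> finite {i. \<Delta> i \<noteq> Om} \<and> (\<forall>i. isC (\<Delta> i))"

definition ctx_leD :: "(nat \<Rightarrow> 'a::complete_lattice ty) \<Rightarrow> (nat \<Rightarrow> 'a ty) \<Rightarrow> bool" where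
  "ctx_leD \<Gamma>' \<Gamma> \<longleftrightarrow> (\<forall>x. leD (\<Gamma>' x) (\<Gamma> x))"

definition ctx_leC :: "(nat \<Rightarrow> 'a::complete_lattice ty) \<Rightarrow> (nat \<Rightarrow> 'a ty) \<Rightarrow> bool" where
  "ctx_leC \<Delta>' \<Delta> \<longleftrightarrow> (\<forall>a. leC (\<Delta>' a) (\<Delta> a))"

inductive typ_trm :: "(nat \<Rightarrow> 'a::complete_lattice ty) \<Rightarrow> trm \<Rightarrow> 'a ty \<Rightarrow> (nat \<Rightarrow> 'a ty) \<Rightarrow> bool"
      and typ_cmd :: "(nat \<Rightarrow> 'a::complete_lattice ty) \<Rightarrow> cmd \<Rightarrow> 'a ty \<Rightarrow> (nat \<Rightarrow> 'a ty) \<Rightarrow> bool"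
where
  T_Ax: "basis \<Gamma> \<Longrightarrow> name_ctx \<Delta> \<Longrightarrow> typ_trm \<Gamma> (Var x) (\<Gamma> x) \<Delta>"
| T_Abs: "typ_trm \<Gamma> M (Arr k r) \<Delta> \<Longrightarrow>
     typ_trm (\<lambda>i. \<Gamma> (Suc i)) (Lam M) (Arr (Times (\<Gamma> 0) k) r) \<Delta>"
| T_App: "typ_trm \<Gamma> M (Arr (Times d k) r) \<Delta> \<Longrightarrow> typ_trm \<Gamma> N d \<Delta> \<Longrightarrow>
     typ_trm \<Gamma> (App M N) (Arr k r) \<Delta>"
| T_Mu: "typ_cmd \<Gamma> C (Times (Arr k' r) k') \<Delta> \<Longrightarrow>
     typ_trm \<Gamma> (Mu C) (Arr (\<Delta> 0) r) (\<lambda>i. \<Delta> (Suc i))"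
| T_Inter: "typ_trm \<Gamma> M s \<Delta> \<Longrightarrow> typ_trm \<Gamma> M t \<Delta> \<Longrightarrow> typ_trm \<Gamma> M (Inter s t) \<Delta>"
| T_Om: "basis \<Gamma> \<Longrightarrow> name_ctx \<Delta> \<Longrightarrow> typ_trm \<Gamma> M Om \<Delta>"
| T_Le: "typ_trm \<Gamma> M s \<Delta> \<Longrightarrow> leD s t \<Longrightarrow> typ_trm \<Gamma> M t \<Delta>"
| C_Cmd: "typ_trm \<Gamma> M d \<Delta> \<Longrightarrow> typ_cmd \<Gamma> (Named a M) (Times d (\<Delta> a)) \<Delta>"
| C_Inter: "typ_cmd \<Gamma> C s \<Delta> \<Longrightarrow> typ_cmd \<Gamma> C t \<Delta> \<Longrightarrow> typ_cmd \<Gamma> C (Inter s t) \<Delta>"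
| C_Om: "basis \<Gamma> \<Longrightarrow> name_ctx \<Delta> \<Longrightarrow> typ_cmd \<Gamma> C Om \<Delta>"
| C_Le: "typ_cmd \<Gamma> C s \<Delta> \<Longrightarrow> leC s t \<Longrightarrow> typ_cmd \<Gamma> C t \<Delta>"

end

theory Submission
  imports Defs
begin

text \<open>Induction on the derivation, generalising over the smaller contexts.
  An axiom \<open>x : \<Gamma> x\<close> is recovered from \<open>x : \<Gamma>' x\<close> by subsumption, since
  \<open>\<Gamma>' x \<le>\<^sub>D \<Gamma> x\<close>. Under a binder (\<open>\<lambda>\<close> or \<open>\<mu>\<close>) the smaller context is extended
  by the type the original derivation gives the bound variable or name.
  A command \<open>[\<alpha>]M\<close> now receives \<open>\<delta> \<times> \<Delta>' \<alpha>\<close>, which is below \<open>\<delta> \<times> \<Delta> \<alpha>\<close> by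
  covariance of \<open>\<times>\<close>.\<close>

lemma compact_bot: "compact (bot :: 'a::complete_lattice)"
  unfolding compact_def directed_def by auto

lemma compact_sup:
  fixes a b :: "'a::complete_lattice"
  assumes "compact a" and "compact b"
  shows "compact (sup a b)"
  unfolding compact_def
proof (intro allI impI)
  fix D :: "'a set"
  assume D: "directed D \<and> sup a b \<le> Sup D"
  obtain d1 where d1: "d1 \<in> D" "a \<le> d1" using D assms(1) unfolding compact_def by auto
  obtain d2 where d2: "d2 \<in> D" "b \<le> d2" using D assms(2) unfolding compact_def by auto
  obtain z where "z \<in> D" "d1 \<le> z" "d2 \<le> z" using D d1 d2 unfolding directed_def by blast
  then show "\<exists>d\<in>D. sup a b \<le> d" using d1 d2 by (meson order_trans sup_least)
qed

lemma isR_imp_isD: "isR s \<Longrightarrow> isD s"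
  by (induction s) auto

lemma leR_sorts: "leR s t \<Longrightarrow> isR s \<and> isR t"
  by (induction rule: leR.induct) (auto simp: compact_bot compact_sup)

lemma leD_leC_sorts:
  fixes s t :: "'a::complete_lattice ty"
  shows "leD s t \<Longrightarrow> isD s \<and> isD t" and "leC s t \<Longrightarrow> isC s \<and> isC t"
  by (induction rule: leD_leC.inducts) (simp_all add: leR_sorts isR_imp_isD)

lemma finite_nonOm_case_nat:
  assumes "finite {i. G i \<noteq> Om}"
  shows "finite {i. case_nat t G i \<noteq> Om}"
proof -
  have "{i. case_nat t G i \<noteq> Om} \<subseteq> insert 0 (Suc ` {i. G i \<noteq> Om})"
  proof
    fix i assume "i \<in> {i. case_nat t G i \<noteq> Om}"
    then show "i \<in> insert 0 (Suc ` {i. G i \<noteq> Om})" by (cases i) auto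
  qed
  then show ?thesis using assms by (auto intro: finite_subset)
qed

lemma finite_nonOm_shift:
  assumes "finite {i. G i \<noteq> Om}"
  shows "finite {i. G (Suc i) \<noteq> Om}"
  using finite_vimageI[OF assms, of Suc] by (simp add: vimage_def)

lemma basis_shift: "basis \<Gamma> \<Longrightarrow> basis (\<lambda>i. \<Gamma> (Suc i))"
  by (simp add: basis_def finite_nonOm_shift)

lemma name_ctx_shift: "name_ctx \<Delta> \<Longrightarrow> name_ctx (\<lambda>i. \<Delta> (Suc i))"
  by (simp add: name_ctx_def finite_nonOm_shift)

lemma basis_case_nat: "isD t \<Longrightarrow> basis \<Gamma> \<Longrightarrow> basis (case_nat t \<Gamma>)"
  by (simp add: basis_def finite_nonOm_case_nat split: nat.splits)

lemma name_ctx_case_nat: "isC t \<Longrightarrow> name_ctx \<Delta> \<Longrightarrow> name_ctx (case_nat t \<Delta>)"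
  by (simp add: name_ctx_def finite_nonOm_case_nat split: nat.splits)

lemma ctx_leD_case_nat: "isD t \<Longrightarrow> ctx_leD \<Gamma>' \<Gamma> \<Longrightarrow> ctx_leD (case_nat t \<Gamma>') (case_nat t \<Gamma>)"
  by (simp add: ctx_leD_def D_refl split: nat.splits)

lemma ctx_leC_case_nat: "isC t \<Longrightarrow> ctx_leC \<Delta>' \<Delta> \<Longrightarrow> ctx_leC (case_nat t \<Delta>') (case_nat t \<Delta>)"
  by (simp add: ctx_leC_def C_refl split: nat.splits)

lemma case_nat_head_shift: "case_nat (f 0) (\<lambda>i. f (Suc i)) = f"
  by (rule ext) (simp split: nat.splits)

lemma typ_trm_typ_cmd_sorts:
  shows "typ_trm \<Gamma> M s \<Delta> \<Longrightarrow> basis \<Gamma> \<and> name_ctx \<Delta> \<and> isD s"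
    and "typ_cmd \<Gamma> C s \<Delta> \<Longrightarrow> basis \<Gamma> \<and> name_ctx \<Delta> \<and> isC s"
proof (induction rule: typ_trm_typ_cmd.inducts)
  case (T_Ax \<Gamma> \<Delta> x)
  then show ?case by (simp add: basis_def)
next
  case (T_Abs \<Gamma> M k r \<Delta>)
  then show ?case by (simp add: basis_shift) (simp add: basis_def)
next
  case (T_Mu \<Gamma> C k' r \<Delta>)
  then show ?case by (simp add: name_ctx_shift) (simp add: name_ctx_def)
next
  case (C_Cmd \<Gamma> M d \<Delta> a)
  then show ?case by (simp add: name_ctx_def)
qed (auto dest: leD_leC_sorts)

lemma typ_trm_typ_cmd_ctx_antimono:
  shows "typ_trm \<Gamma> M s \<Delta> \<Longrightarrow> basis \<Gamma>' \<Longrightarrow> name_ctx \<Delta>' \<Longrightarrow>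
           ctx_leD \<Gamma>' \<Gamma> \<Longrightarrow> ctx_leC \<Delta>' \<Delta> \<Longrightarrow> typ_trm \<Gamma>' M s \<Delta>'"
    and "typ_cmd \<Gamma> C s \<Delta> \<Longrightarrow> basis \<Gamma>' \<Longrightarrow> name_ctx \<Delta>' \<Longrightarrow>
           ctx_leD \<Gamma>' \<Gamma> \<Longrightarrow> ctx_leC \<Delta>' \<Delta> \<Longrightarrow> typ_cmd \<Gamma>' C s \<Delta>'"
proof (induction arbitrary: \<Gamma>' \<Delta>' and \<Gamma>' \<Delta>' rule: typ_trm_typ_cmd.inducts)
  case (T_Ax \<Gamma> \<Delta> x)
  have "typ_trm \<Gamma>' (Var x) (\<Gamma>' x) \<Delta>'"
    using T_Ax.prems by (intro typ_trm_typ_cmd.T_Ax)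
  then show ?case
    using T_Ax.prems by (auto simp: ctx_leD_def intro: typ_trm_typ_cmd.T_Le)
next
  case (T_Abs \<Gamma> M k r \<Delta>)
  have "isD (\<Gamma> 0)"
    using typ_trm_typ_cmd_sorts(1)[OF T_Abs.hyps] by (simp add: basis_def)
  then have "typ_trm (case_nat (\<Gamma> 0) \<Gamma>') M (Arr k r) \<Delta>'"
    using T_Abs.prems ctx_leD_case_nat[of "\<Gamma> 0" \<Gamma>' "\<lambda>i. \<Gamma> (Suc i)"]
    by (intro T_Abs.IH) (simp_all add: basis_case_nat case_nat_head_shift)
  from typ_trm_typ_cmd.T_Abs[OF this] show ?case by simp
next
  case (T_Mu \<Gamma> C k' r \<Delta>)
  have "isC (\<Delta> 0)"
    using typ_trm_typ_cmd_sorts(2)[OF T_Mu.hyps] by (simp add: name_ctx_def)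
  then have "typ_cmd \<Gamma>' C (Times (Arr k' r) k') (case_nat (\<Delta> 0) \<Delta>')"
    using T_Mu.prems ctx_leC_case_nat[of "\<Delta> 0" \<Delta>' "\<lambda>i. \<Delta> (Suc i)"]
    by (intro T_Mu.IH) (simp_all add: name_ctx_case_nat case_nat_head_shift)
  from typ_trm_typ_cmd.T_Mu[OF this] show ?case by simp
next
  case (C_Cmd \<Gamma> M d \<Delta> a)
  have "isD d"
    using typ_trm_typ_cmd_sorts(1)[OF C_Cmd.hyps] by blast
  have "typ_cmd \<Gamma>' (Named a M) (Times d (\<Delta>' a)) \<Delta>'"
    using C_Cmd by (intro typ_trm_typ_cmd.C_Cmd) blast
  moreover have "leC (Times d (\<Delta>' a)) (Times d (\<Delta> a))"
    using C_Cmd.prems \<open>isD d\<close> by (auto simp: ctx_leC_def intro: C_times D_refl)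
  ultimately show ?case
    by (rule typ_trm_typ_cmd.C_Le)
qed (blast intro: typ_trm_typ_cmd.intros)+

theorem lemma4p7:
  fixes \<Gamma> \<Gamma>' \<Delta> \<Delta>' :: "nat \<Rightarrow> 'a::complete_lattice ty"
  assumes "omega_algebraic TYPE('a)"
    and "basis \<Gamma>" and "basis \<Gamma>'" and "name_ctx \<Delta>" and "name_ctx \<Delta>'"
    and "ctx_leD \<Gamma>' \<Gamma>" and "ctx_leC \<Delta>' \<Delta>"
  shows "(\<forall>M \<sigma>. typ_trm \<Gamma> M \<sigma> \<Delta> \<longrightarrow> typ_trm \<Gamma>' M \<sigma> \<Delta>') \<and>
         (\<forall>C \<sigma>. typ_cmd \<Gamma> C \<sigma> \<Delta> \<longrightarrow> typ_cmd \<Gamma>' C \<sigma> \<Delta>')"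
  using typ_trm_typ_cmd_ctx_antimono assms(3-7) by blast

end
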